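(* Let $T$ be a tree. Then $\phi(K_1\nabla T)=\lfloor v(T)/2\rfloor$.
   Context: $v(T)$ is the number of vertices of $T$; $K_1\nabla T$ is obtained from $T$ by adding a new vertex adjacent to all vertices of $T$. For a graph $G$, $\phi(G)$ is the maximum number of pairwise edge-disjoint cycles in $G$. *)

theory Defs
  imports Main
begin

definition simple_graph :: "'a set \<Rightarrow> 'a set set \<Rightarrow> bool" where
  "simple_graph V E \<longleftrightarrow> finite V \<and>
     (\<forall>e\<in>E. \<exists>u v. u \<noteq> v \<and> u \<in> V \<and> v \<in> V \<and> e = {u, v})"

definition connected_graph :: "'a set \<Rightarrow> 'a set set \<Rightarrow> bool" where
  "connected_graph V E \<longleftrightarrow> V \<noteq> {} \<and>
     (\<forall>u\<in>V. \<forall>v\<in>V. (\<lambda>x y. {x, y} \<in> E)\<^sup>*\<^sup>* u v)"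

definition is_cycle_list :: "'a set set \<Rightarrow> 'a list \<Rightarrow> bool" where
  "is_cycle_list E vs \<longleftrightarrow> length vs \<ge> 3 \<and> distinct vs \<and>
     (\<forall>i < length vs. {vs ! i, vs ! ((i + 1) mod length vs)} \<in> E)"

definition cycle_edges :: "'a list \<Rightarrow> 'a set set" where
  "cycle_edges vs = {{vs ! i, vs ! ((i + 1) mod length vs)} | i. i < length vs}"

definition cycles :: "'a set \<Rightarrow> 'a set set \<Rightarrow> 'a set set set" where
  "cycles V E = {cycle_edges vs | vs. set vs \<subseteq> V \<and> is_cycle_list E vs}"

definition is_tree :: "'a set \<Rightarrow> 'a set set \<Rightarrow> bool" where
  "is_tree V E \<longleftrightarrow> simple_graph V E \<and> connected_graph V E \<and> cycles V E = {}"

definition phi :: "'a set \<Rightarrow> 'a set set \<Rightarrow> nat" where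
  "phi V E = Max {card F | F. F \<subseteq> cycles V E \<and> pairwise disjnt F}"

text \<open>K_1 \<nabla> T: new vertex None adjacent to all (Some-tagged) vertices of T.\<close>
definition cone_vertices :: "'a set \<Rightarrow> 'a option set" where
  "cone_vertices V = insert None (Some ` V)"

definition cone_edges :: "'a set \<Rightarrow> 'a set set \<Rightarrow> 'a option set set" where
  "cone_edges V E = (image Some) ` E \<union> {{None, Some v} | v. v \<in> V}"

end

theory Submission
  imports Defs
begin

text \<open>Since T is acyclic, every cycle of the cone passes through the apex and uses two of the
  v(T) edges at the apex, so at most floor(v(T)/2) cycles are pairwise edge-disjoint.
  Conversely, in a tree every vertex set S of even size can be paired off by edge-disjoint paths
  whose end vertices are exactly S (remove a leaf and induct).  Taking |S| = 2 floor(v(T)/2) and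
  closing each path through the apex gives floor(v(T)/2) edge-disjoint cycles.\<close>

section \<open>Paths and cycles as vertex lists\<close>

fun path_edges :: "'a list \<Rightarrow> 'a set set" where
  "path_edges (x # y # xs) = insert {x, y} (path_edges (y # xs))"
| "path_edges _ = {}"

lemma path_edges_conv_nth: "path_edges p = (\<lambda>i. {p ! i, p ! Suc i}) ` {..<length p - 1}"
  by (induction p rule: path_edges.induct) (simp_all add: lessThan_Suc_eq_insert_0 image_image)

lemma finite_path_edges [simp]: "finite (path_edges p)"
  by (induction p rule: path_edges.induct) simp_all

lemma path_edges_Cons:
  "path_edges (x # xs) = (if xs = [] then {} else insert {x, hd xs} (path_edges xs))"
  by (cases xs) simp_all

lemma path_edges_snoc:
  "path_edges (xs @ [y]) = (if xs = [] then {} else insert {last xs, y} (path_edges xs))"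
  by (induction xs rule: path_edges.induct) (auto simp: insert_commute)

lemma path_edges_map: "path_edges (map f p) = (\<lambda>e. f ` e) ` path_edges p"
  by (induction p rule: path_edges.induct) auto

lemma path_edges_rev: "path_edges (rev p) = path_edges p"
  by (induction p) (auto simp: path_edges_snoc path_edges_Cons last_rev insert_commute)

lemma path_edges_subset_set: "e \<in> path_edges p \<Longrightarrow> e \<subseteq> set p"
  by (induction p rule: path_edges.induct) auto

lemma path_edges_drop_subset: "path_edges (drop k p) \<subseteq> path_edges p"
  unfolding path_edges_conv_nth by auto

lemma cycle_edges_conv_path_edges:
  assumes "vs \<noteq> []"
  shows "cycle_edges vs = insert {last vs, hd vs} (path_edges vs)"
proof -
  let ?L = "length vs"
  have L: "?L = Suc (?L - 1)" using assms by simp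
  have "cycle_edges vs = (\<lambda>i. {vs ! i, vs ! ((i + 1) mod ?L)}) ` {..<Suc (?L - 1)}"
    unfolding cycle_edges_def L[symmetric] by blast
  also have "\<dots> = insert {last vs, hd vs} ((\<lambda>i. {vs ! i, vs ! Suc i}) ` {..<?L - 1})"
    unfolding lessThan_Suc using assms by (simp add: last_conv_nth hd_conv_nth)
  finally show ?thesis unfolding path_edges_conv_nth .
qed

lemma finite_cycle_edges [simp]: "finite (cycle_edges vs)"
  by (cases "vs = []") (simp_all add: cycle_edges_conv_path_edges cycle_edges_def)

lemma cycle_edges_map: "cycle_edges (map f vs) = (\<lambda>e. f ` e) ` cycle_edges vs"
  by (cases "vs = []")
    (simp add: cycle_edges_def, simp add: cycle_edges_conv_path_edges path_edges_map last_map hd_map)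

lemma cycle_edges_subset_Pow: "cycle_edges vs \<subseteq> Pow (set vs)"
  by (cases "vs = []")
    (simp add: cycle_edges_def, auto simp: cycle_edges_conv_path_edges dest: path_edges_subset_set)

lemma cycle_edges_rotate1: "cycle_edges (rotate1 vs) = cycle_edges vs"
proof (cases vs)
  case (Cons x xs)
  then show ?thesis
    by (cases "xs = []") (auto simp: cycle_edges_conv_path_edges path_edges_snoc path_edges_Cons)
qed simp

lemma cycle_edges_rotate: "cycle_edges (rotate n vs) = cycle_edges vs"
  by (induction n) (simp_all add: cycle_edges_rotate1)

lemma is_cycle_list_iff:
  "is_cycle_list E vs \<longleftrightarrow> 3 \<le> length vs \<and> distinct vs \<and> cycle_edges vs \<subseteq> E"
  unfolding is_cycle_list_def cycle_edges_def by blast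

lemma two_cycle_edges_at_vertex:
  assumes "is_cycle_list E vs" "v \<in> set vs"
  shows "2 \<le> card {e \<in> cycle_edges vs. v \<in> e}"
proof -
  obtain i where i: "i < length vs" "vs ! i = v" using assms(2) by (metis in_set_conv_nth)
  define ws where "ws = rotate i vs"
  have "hd ws = v" using i hd_rotate_conv_nth[of vs i] by (cases vs) (auto simp: ws_def)
  moreover have "3 \<le> length ws" "distinct ws"
    using assms(1) by (simp_all add: ws_def is_cycle_list_def)
  ultimately obtain w u us where ws: "ws = v # w # u # us"
    by (metis Suc_le_length_iff list.sel(1) numeral_3_eq_3)
  have "last ws \<in> set (u # us)" "w \<notin> set (u # us)" "v \<noteq> w" using \<open>distinct ws\<close> by (simp_all add: ws)
  then have "{last ws, v} \<noteq> {v, w}" by (auto simp: doubleton_eq_iff)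
  then have "card {{last ws, v}, {v, w}} = 2" by simp
  moreover have "{{last ws, v}, {v, w}} \<subseteq> {e \<in> cycle_edges vs. v \<in> e}"
    unfolding cycle_edges_rotate[of i vs, folded ws_def, symmetric]
    by (simp add: ws cycle_edges_conv_path_edges)
  then have "card {{last ws, v}, {v, w}} \<le> card {e \<in> cycle_edges vs. v \<in> e}"
    by (intro card_mono) simp_all
  ultimately show ?thesis by simp
qed

lemma cycles_subset_edges: "C \<in> cycles V E \<Longrightarrow> C \<subseteq> E"
  unfolding cycles_def is_cycle_list_iff by blast

lemma cycles_mono: "V' \<subseteq> V \<Longrightarrow> E' \<subseteq> E \<Longrightarrow> cycles V' E' \<subseteq> cycles V E"
  unfolding cycles_def is_cycle_list_iff by blast

lemma finite_cycles: "finite V \<Longrightarrow> finite (cycles V E)"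
  by (rule finite_subset[of _ "Pow (Pow V)"])
    (auto simp: cycles_def dest: cycle_edges_subset_Pow[THEN subsetD])

definition is_path :: "'a set \<Rightarrow> 'a set set \<Rightarrow> 'a list \<Rightarrow> bool" where
  "is_path V E p \<longleftrightarrow> 2 \<le> length p \<and> distinct p \<and> set p \<subseteq> V \<and> path_edges p \<subseteq> E"

definition path_ends :: "'a list \<Rightarrow> 'a set" where
  "path_ends p = {hd p, last p}"

lemma is_path_mono: "is_path V E p \<Longrightarrow> V \<subseteq> V' \<Longrightarrow> E \<subseteq> E' \<Longrightarrow> is_path V' E' p"
  unfolding is_path_def by blast

lemma is_path_rev [simp]: "is_path V E (rev p) \<longleftrightarrow> is_path V E p"
  by (simp add: is_path_def path_edges_rev)

lemma is_path_snoc: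
  assumes "is_path V E p" "x \<in> V" "x \<notin> set p" "{last p, x} \<in> E"
  shows "is_path V E (p @ [x])"
  using assms by (auto simp: is_path_def path_edges_snoc)

lemma is_path_drop: "is_path V E p \<Longrightarrow> 2 \<le> length (drop k p) \<Longrightarrow> is_path V E (drop k p)"
  using path_edges_drop_subset[of k p] set_drop_subset[of k p] by (auto simp: is_path_def)

lemma path_edges_outside: "is_path V E p \<Longrightarrow> a \<notin> V \<Longrightarrow> e \<in> path_edges p \<Longrightarrow> a \<notin> e"
  unfolding is_path_def by (auto dest: path_edges_subset_set)

lemma path_ends_rev [simp]: "path_ends (rev p) = path_ends p"
  by (cases p) (auto simp: path_ends_def hd_rev last_rev)

lemma card_path_ends: "is_path V E p \<Longrightarrow> card (path_ends p) = 2"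
proof (cases p rule: rev_cases)
  case (snoc ys y)
  assume "is_path V E p"
  then have "ys \<noteq> []" "y \<notin> set ys" by (auto simp: is_path_def snoc)
  then have "hd p \<noteq> last p" by (auto simp: snoc hd_append dest: hd_in_set)
  then show ?thesis by (simp add: path_ends_def)
qed (simp add: is_path_def)

lemma closed_path_in_cycles:
  assumes "is_path V E p" "3 \<le> length p" "{last p, hd p} \<in> E"
  shows "cycle_edges p \<in> cycles V E"
proof -
  have "p \<noteq> []" using assms(2) by auto
  then have "is_cycle_list E p"
    using assms by (auto simp: is_cycle_list_iff is_path_def cycle_edges_conv_path_edges)
  then show ?thesis using assms(1) unfolding cycles_def is_path_def by blast
qed

section \<open>Trees\<close>

lemma simple_graph_edgeD:
  assumes "simple_graph V E" "{x, y} \<in> E"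
  shows "x \<noteq> y" "x \<in> V" "y \<in> V"
  using assms unfolding simple_graph_def by (metis doubleton_eq_iff)+

lemma simple_graph_edgeE:
  assumes "simple_graph V E" "e \<in> E"
  obtains x y where "e = {x, y}" "x \<noteq> y" "x \<in> V" "y \<in> V"
  using assms unfolding simple_graph_def by blast

lemma ex_longest_path:
  assumes "finite V" "is_path V E p\<^sub>0"
  obtains p where "is_path V E p" "\<And>q. is_path V E q \<Longrightarrow> length q \<le> length p"
proof -
  have "length p < Suc (card V)" if "is_path V E p" for p
    using that assms(1) by (metis card_mono distinct_card is_path_def less_Suc_eq_le)
  then show thesis using ex_has_greatest_nat[of "is_path V E" p\<^sub>0 length] assms(2) that by blast
qed

text \<open>A further neighbour of the end of a longest path would either prolong the path or close
  a cycle with it.\<close>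

lemma longest_path_end_neighbour:
  assumes "simple_graph V E" "cycles V E = {}"
    and p: "is_path V E p" and longest: "\<And>q. is_path V E q \<Longrightarrow> length q \<le> length p"
    and p_split: "p = pre @ [b, a]" and ax: "{a, x} \<in> E"
  shows "x = b"
proof (rule ccontr)
  assume "x \<noteq> b"
  have "x \<noteq> a" "x \<in> V" using simple_graph_edgeD[OF assms(1) ax] by auto
  show False
  proof (cases "x \<in> set p")
    case False
    then have "is_path V E (p @ [x])"
      using is_path_snoc[OF p \<open>x \<in> V\<close>] ax by (simp add: p_split)
    then show False using longest by fastforce
  next
    case True
    with \<open>x \<noteq> a\<close> \<open>x \<noteq> b\<close> obtain pre' post where "pre = pre' @ x # post"
      by (auto simp: p_split dest: split_list)
    then have "drop (length pre') p = x # post @ [b, a]" by (simp add: p_split)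
    then have "is_path V E (x # post @ [b, a])" using is_path_drop[OF p, of "length pre'"] by simp
    then have "cycle_edges (x # post @ [b, a]) \<in> cycles V E"
      using ax by (intro closed_path_in_cycles) (auto simp: insert_commute)
    then show False using assms(2) by simp
  qed
qed

lemma tree_has_leaf:
  assumes "is_tree V E" "2 \<le> card V"
  obtains a b where "{a, b} \<in> E" "\<And>w. {a, w} \<in> E \<Longrightarrow> w = b"
proof -
  have simple: "simple_graph V E" and acyclic: "cycles V E = {}" and conn: "connected_graph V E"
    using assms(1) unfolding is_tree_def by auto
  have "finite V" using simple unfolding simple_graph_def by blast
  have "\<not> card V \<le> Suc 0" using assms(2) by simp
  then obtain u w where "u \<in> V" "w \<in> V" "u \<noteq> w"
    using card_le_Suc0_iff_eq[OF \<open>finite V\<close>] by blast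
  then have "(\<lambda>x y. {x, y} \<in> E)\<^sup>*\<^sup>* u w" using conn unfolding connected_graph_def by blast
  then obtain y where "{u, y} \<in> E" using \<open>u \<noteq> w\<close> by (cases rule: converse_rtranclpE) auto
  then have "is_path V E [u, y]"
    using simple_graph_edgeD[OF simple] by (auto simp: is_path_def)
  then obtain p where p: "is_path V E p" and longest: "\<And>q. is_path V E q \<Longrightarrow> length q \<le> length p"
    using ex_longest_path[OF \<open>finite V\<close>] by blast
  obtain a b rest where "rev p = a # b # rest"
    using p unfolding is_path_def by (metis Suc_le_length_iff length_rev numeral_2_eq_2)
  then have p_split: "p = rev rest @ [b, a]" by (metis rev.simps(2) rev_rev_ident append.assoc append_Cons append_Nil)
  show thesis
  proof
    have "{b, a} \<in> path_edges p"
      using path_edges_snoc[of "rev rest @ [b]" a] by (simp add: p_split)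
    then show "{a, b} \<in> E" using p by (auto simp: is_path_def insert_commute)
  next
    show "x = b" if "{a, x} \<in> E" for x
      using longest_path_end_neighbour[OF simple acyclic p longest p_split that] .
  qed
qed

lemma simple_graph_remove_leaf:
  assumes simple: "simple_graph V E" and leaf: "\<And>w. {a, w} \<in> E \<Longrightarrow> w = b"
  shows "simple_graph (V - {a}) (E - {{a, b}})"
  unfolding simple_graph_def
proof (intro conjI ballI)
  show "finite (V - {a})" using simple unfolding simple_graph_def by blast
  fix e assume e: "e \<in> E - {{a, b}}"
  then obtain x y where xy: "e = {x, y}" "x \<noteq> y" "x \<in> V" "y \<in> V"
    using simple_graph_edgeE[OF simple] by blast
  have "a \<notin> e"
  proof
    assume "a \<in> e"
    with xy(1) obtain w where w: "e = {a, w}" by (auto simp: insert_commute)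
    then have "w = b" using e leaf by blast
    then show False using e w by simp
  qed
  then show "\<exists>x y. x \<noteq> y \<and> x \<in> V - {a} \<and> y \<in> V - {a} \<and> e = {x, y}"
    using xy by blast
qed

lemma connected_graph_remove_leaf:
  assumes conn: "connected_graph V E" and "b \<in> V" "a \<noteq> b"
    and leaf: "\<And>w. {a, w} \<in> E \<Longrightarrow> w = b"
  shows "connected_graph (V - {a}) (E - {{a, b}})"
  unfolding connected_graph_def
proof (intro conjI ballI)
  show "V - {a} \<noteq> {}" using assms(2,3) by blast
  let ?R = "\<lambda>x y. {x, y} \<in> E" and ?R' = "\<lambda>x y. {x, y} \<in> E - {{a, b}}"
  have reach: "z = a \<or> ?R'\<^sup>*\<^sup>* b z" if "?R\<^sup>*\<^sup>* b z" for z
    using that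
  proof (induction rule: rtranclp_induct)
    case (step y z)
    show ?case
    proof (cases "y = a")
      case True
      then show ?thesis using leaf step.hyps(2) by simp
    next
      case False
      then have "z = a \<or> ?R' y z" using step.hyps(2) by (auto simp: doubleton_eq_iff)
      then show ?thesis using step.IH False by (meson rtranclp.rtrancl_into_rtrancl)
    qed
  qed simp
  have "symp ?R'" by (auto intro: sympI simp: insert_commute)
  fix x y assume "x \<in> V - {a}" "y \<in> V - {a}"
  then have "?R'\<^sup>*\<^sup>* b x" "?R'\<^sup>*\<^sup>* b y"
    using reach conn \<open>b \<in> V\<close> unfolding connected_graph_def by auto
  then show "?R'\<^sup>*\<^sup>* x y"
    using sympD[OF symp_rtranclp[OF \<open>symp ?R'\<close>]] by (meson rtranclp_trans)
qed

lemma tree_remove_leaf: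
  assumes tree: "is_tree V E" and ab: "{a, b} \<in> E" and leaf: "\<And>w. {a, w} \<in> E \<Longrightarrow> w = b"
  shows "is_tree (V - {a}) (E - {{a, b}})"
proof -
  have simple: "simple_graph V E" and "cycles V E = {}" and conn: "connected_graph V E"
    using tree unfolding is_tree_def by auto
  have "a \<noteq> b" "b \<in> V" using simple_graph_edgeD[OF simple ab] by auto
  have "cycles (V - {a}) (E - {{a, b}}) \<subseteq> cycles V E" by (rule cycles_mono) auto
  then show ?thesis
    unfolding is_tree_def
    using simple_graph_remove_leaf[OF simple leaf] \<open>cycles V E = {}\<close>
      connected_graph_remove_leaf[OF conn \<open>b \<in> V\<close> \<open>a \<noteq> b\<close> leaf] by blast
qed

section \<open>Pairing vertex sets by edge-disjoint paths\<close>

definition path_pairing :: "'a set \<Rightarrow> 'a set set \<Rightarrow> 'a set \<Rightarrow> 'a list set \<Rightarrow> bool" where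
  "path_pairing V E S P \<longleftrightarrow> finite P \<and> (\<forall>p\<in>P. is_path V E p) \<and>
     pairwise (\<lambda>p q. disjnt (path_edges p) (path_edges q) \<and> disjnt (path_ends p) (path_ends q)) P \<and>
     \<Union>(path_ends ` P) = S"

lemma path_pairing_empty: "path_pairing V E {} {}"
  by (simp add: path_pairing_def)

lemma path_pairing_mono:
  "path_pairing V' E' S P \<Longrightarrow> V' \<subseteq> V \<Longrightarrow> E' \<subseteq> E \<Longrightarrow> path_pairing V E S P"
  unfolding path_pairing_def is_path_def by blast

lemma path_ends_subset: "path_pairing V E S P \<Longrightarrow> p \<in> P \<Longrightarrow> path_ends p \<subseteq> S"
  unfolding path_pairing_def by blast

lemma path_pairing_subset: "path_pairing V E S P \<Longrightarrow> S \<subseteq> V"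
  unfolding path_pairing_def is_path_def path_ends_def
  by (fastforce dest!: bspec intro: hd_in_set last_in_set)

lemma card_path_pairing:
  assumes "path_pairing V E S P"
  shows "card S = 2 * card P"
proof -
  have "card S = (\<Sum>p\<in>P. card (path_ends p))"
    using assms unfolding path_pairing_def
    by (auto intro!: card_UN_disjoint simp: path_ends_def pairwise_def disjnt_def)
  also have "\<dots> = (\<Sum>p\<in>P. 2)"
    using assms card_path_ends by (intro sum.cong) (auto simp: path_pairing_def)
  finally show ?thesis by simp
qed

lemma path_pairing_insert:
  assumes "path_pairing V E S P" "is_path V E q" "disjnt (path_ends q) S"
    and "\<And>p. p \<in> P \<Longrightarrow> disjnt (path_edges q) (path_edges p)"
  shows "path_pairing V E (path_ends q \<union> S) (insert q P)"
proof -
  have "disjnt (path_ends q) (path_ends p)" if "p \<in> P" for p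
    using assms(3) path_ends_subset[OF assms(1) that] by (auto simp: disjnt_def)
  then show ?thesis
    using assms unfolding path_pairing_def pairwise_insert by (auto simp: disjnt_sym)
qed

lemma path_pairing_remove:
  assumes "path_pairing V E S P" "p \<in> P"
  shows "path_pairing V E (S - path_ends p) (P - {p})"
proof -
  have "\<Union>(path_ends ` (P - {p})) = S - path_ends p"
    using assms unfolding path_pairing_def pairwise_def disjnt_def by blast
  then show ?thesis
    using assms(1) unfolding path_pairing_def by (auto intro: pairwise_subset)
qed

lemma path_pairing_reverse:
  assumes "path_pairing V E S P" "p \<in> P"
  shows "path_pairing V E S (insert (rev p) (P - {p}))"
proof -
  have "disjnt (path_edges p) (path_edges r)" if "r \<in> P - {p}" for r
    using assms that unfolding path_pairing_def pairwise_def by auto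
  then have "path_pairing V E (path_ends (rev p) \<union> (S - path_ends p)) (insert (rev p) (P - {p}))"
    using assms path_pairing_remove[OF assms]
    by (intro path_pairing_insert) (auto simp: path_pairing_def path_edges_rev disjnt_def)
  then show ?thesis using path_ends_subset[OF assms] by (simp add: Un_absorb1)
qed

lemma path_pairing_orient:
  assumes "path_pairing V E S P" "b \<in> S"
  obtains P' q where "path_pairing V E S P'" "q \<in> P'" "last q = b"
proof -
  obtain p where p: "p \<in> P" "b \<in> path_ends p" using assms unfolding path_pairing_def by blast
  then have "p \<noteq> []" using assms(1) by (auto simp: path_pairing_def is_path_def)
  show thesis
  proof (cases "last p = b")
    case True
    then show thesis using that assms(1) p(1) by blast
  next
    case False
    then have "last (rev p) = b"
      using p(2) \<open>p \<noteq> []\<close> by (auto simp: path_ends_def last_rev)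
    then show thesis using that path_pairing_reverse[OF assms(1) p(1)] by blast
  qed
qed

lemma path_pairing_add_edge:
  assumes "path_pairing V E S P" "a \<notin> V" "b \<in> V" "b \<notin> S"
  shows "path_pairing (insert a V) (insert {a, b} E) (insert a (insert b S)) (insert [a, b] P)"
proof -
  have "path_pairing (insert a V) (insert {a, b} E) (path_ends [a, b] \<union> S) (insert [a, b] P)"
  proof (rule path_pairing_insert)
    show "path_pairing (insert a V) (insert {a, b} E) S P"
      using assms(1) by (rule path_pairing_mono) auto
    show "is_path (insert a V) (insert {a, b} E) [a, b]"
      using assms(2,3) by (auto simp: is_path_def)
    show "disjnt (path_ends [a, b]) S"
      using path_pairing_subset[OF assms(1)] assms(2,4) by (auto simp: path_ends_def disjnt_def)
    show "disjnt (path_edges [a, b]) (path_edges p)" if "p \<in> P" for p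
      using path_edges_outside[of V E p a] assms(1,2) that
      by (auto simp: path_pairing_def disjnt_def)
  qed
  then show ?thesis by (simp add: path_ends_def)
qed

lemma path_pairing_extend:
  assumes "path_pairing V E S P" "a \<notin> V" "b \<in> S"
  obtains P' where "path_pairing (insert a V) (insert {a, b} E) (insert a (S - {b})) P'"
proof -
  obtain P\<^sub>0 q where P\<^sub>0: "path_pairing V E S P\<^sub>0" "q \<in> P\<^sub>0" and "last q = b"
    using path_pairing_orient[OF assms(1,3)] by blast
  have q: "is_path V E q" using P\<^sub>0 unfolding path_pairing_def by blast
  then have "q \<noteq> []" by (auto simp: is_path_def)
  have ends_q: "path_ends q = {hd q, b}" and "hd q \<noteq> b"
    using \<open>last q = b\<close> card_path_ends[OF q] by (auto simp: path_ends_def)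
  have "hd q \<in> S" using path_ends_subset[OF P\<^sub>0] ends_q by blast
  let ?V = "insert a V" and ?E = "insert {a, b} E"
  have "path_pairing ?V ?E (path_ends (q @ [a]) \<union> (S - path_ends q)) (insert (q @ [a]) (P\<^sub>0 - {q}))"
  proof (rule path_pairing_insert)
    show "path_pairing ?V ?E (S - path_ends q) (P\<^sub>0 - {q})"
      using path_pairing_remove[OF P\<^sub>0] by (rule path_pairing_mono) auto
    show "is_path ?V ?E (q @ [a])"
      using is_path_mono[OF q, of ?V ?E] assms(2) q \<open>last q = b\<close>
      by (intro is_path_snoc) (auto simp: is_path_def insert_commute)
    show "disjnt (path_ends (q @ [a])) (S - path_ends q)"
      using path_pairing_subset[OF assms(1)] assms(2) ends_q \<open>q \<noteq> []\<close>
      by (auto simp: path_ends_def disjnt_def)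
    show "disjnt (path_edges (q @ [a])) (path_edges r)" if "r \<in> P\<^sub>0 - {q}" for r
    proof -
      have "is_path V E r" "disjnt (path_edges q) (path_edges r)"
        using P\<^sub>0 that unfolding path_pairing_def pairwise_def by auto
      then show ?thesis
        using path_edges_outside[of V E r a] assms(2) \<open>last q = b\<close> \<open>q \<noteq> []\<close>
        by (auto simp: path_edges_snoc disjnt_def)
    qed
  qed
  moreover have "path_ends (q @ [a]) \<union> (S - path_ends q) = insert a (S - {b})"
    using ends_q \<open>hd q \<noteq> b\<close> \<open>hd q \<in> S\<close> \<open>q \<noteq> []\<close> by (auto simp: path_ends_def)
  ultimately show thesis using that by simp
qed

lemma path_pairing_add_leaf:
  assumes pairings: "\<And>S'. S' \<subseteq> V \<Longrightarrow> even (card S') \<Longrightarrow> \<exists>P. path_pairing V E S' P"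
    and "a \<notin> V" "b \<in> V" "finite S" "S \<subseteq> insert a V" "even (card S)"
  shows "\<exists>P. path_pairing (insert a V) (insert {a, b} E) S P"
proof -
  have "a \<noteq> b" using assms(2,3) by blast
  consider "a \<notin> S" | "a \<in> S" "b \<in> S" | "a \<in> S" "b \<notin> S" by blast
  then show ?thesis
  proof cases
    case 1
    then obtain P where "path_pairing V E S P" using pairings assms(5,6) by blast
    then have "path_pairing (insert a V) (insert {a, b} E) S P" by (rule path_pairing_mono) auto
    then show ?thesis ..
  next
    case 2
    have "card (S - {a, b}) = card S - 2"
      using 2 \<open>finite S\<close> \<open>a \<noteq> b\<close> by (subst card_Diff_subset) auto
    then have "even (card (S - {a, b}))" using assms(6) by simp
    moreover have "S - {a, b} \<subseteq> V" using assms(5) by blast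
    ultimately obtain P where "path_pairing V E (S - {a, b}) P" using pairings by blast
    then have "path_pairing (insert a V) (insert {a, b} E) (insert a (insert b (S - {a, b}))) (insert [a, b] P)"
      using \<open>a \<notin> V\<close> \<open>b \<in> V\<close> by (rule path_pairing_add_edge) simp
    moreover have "insert a (insert b (S - {a, b})) = S" using 2 by auto
    ultimately show ?thesis by auto
  next
    case 3
    have "card (insert b (S - {a})) = card S"
      using 3 \<open>finite S\<close> card_Suc_Diff1[of S a] by (simp add: card_insert_disjoint del: card_Diff_singleton)
    then have "even (card (insert b (S - {a})))" using assms(6) by simp
    moreover have "insert b (S - {a}) \<subseteq> V" using assms(3,5) by blast
    ultimately obtain P where P: "path_pairing V E (insert b (S - {a})) P" using pairings by blast
    obtain P' where "path_pairing (insert a V) (insert {a, b} E) (insert a (insert b (S - {a}) - {b})) P'"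
      using path_pairing_extend[OF P \<open>a \<notin> V\<close> insertI1] .
    moreover have "insert a (insert b (S - {a}) - {b}) = S" using 3 by auto
    ultimately show ?thesis by auto
  qed
qed

lemma tree_path_pairing:
  assumes "is_tree V E" "S \<subseteq> V" "even (card S)"
  shows "\<exists>P. path_pairing V E S P"
  using assms
proof (induction "card V" arbitrary: V E S rule: less_induct)
  case less
  have simple: "simple_graph V E" using less.prems(1) unfolding is_tree_def by blast
  have "finite V" using simple unfolding simple_graph_def by blast
  have "finite S" using less.prems(2) \<open>finite V\<close> by (rule finite_subset)
  show ?case
  proof (cases "S = {}")
    case True
    then show ?thesis using path_pairing_empty by blast
  next
    case False
    with \<open>finite S\<close> have "card S \<noteq> 0" by simp
    with less.prems(3) have "2 \<le> card S" by presburger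
    also have "card S \<le> card V" using less.prems(2) \<open>finite V\<close> by (rule card_mono[rotated])
    finally obtain a b where ab: "{a, b} \<in> E" and leaf: "\<And>w. {a, w} \<in> E \<Longrightarrow> w = b"
      using tree_has_leaf[OF less.prems(1)] by blast
    have "a \<in> V" "b \<in> V" "a \<noteq> b" using simple_graph_edgeD[OF simple ab] by auto
    have "\<exists>P. path_pairing (V - {a}) (E - {{a, b}}) S' P"
      if "S' \<subseteq> V - {a}" "even (card S')" for S'
      using less.hyps[OF card_Diff1_less[OF \<open>finite V\<close> \<open>a \<in> V\<close>]
          tree_remove_leaf[OF less.prems(1) ab leaf] that] .
    then have "\<exists>P. path_pairing (insert a (V - {a})) (insert {a, b} (E - {{a, b}})) S P"
      using \<open>b \<in> V\<close> \<open>a \<noteq> b\<close> \<open>finite S\<close> less.prems(2,3)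
      by (intro path_pairing_add_leaf) auto
    moreover have "insert a (V - {a}) = V" "insert {a, b} (E - {{a, b}}) = E"
      using \<open>a \<in> V\<close> ab by auto
    ultimately show ?thesis by simp
  qed
qed

section \<open>Cycles of the cone\<close>

lemma image_Some_in_cone_edges_iff: "Some ` e \<in> cone_edges V E \<longleftrightarrow> e \<in> E"
  unfolding cone_edges_def by (auto simp: inj_image_eq_iff)

lemma cone_edges_at_apex: "{e \<in> cone_edges V E. None \<in> e} = (\<lambda>v. {None, Some v}) ` V"
  unfolding cone_edges_def by auto

lemma cone_cycle_through_apex:
  assumes "cycles V E = {}" "set vs \<subseteq> cone_vertices V" "is_cycle_list (cone_edges V E) vs"
  shows "None \<in> set vs"
proof (rule ccontr)
  assume "None \<notin> set vs"
  then obtain ws where vs: "vs = map Some ws"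
    by (metis (no_types, lifting) ex_map_conv not_None_eq)
  have "set ws \<subseteq> V" using assms(2) by (auto simp: vs cone_vertices_def)
  moreover have "is_cycle_list E ws"
    using assms(3)
    by (auto simp: vs is_cycle_list_iff cycle_edges_map distinct_map image_Some_in_cone_edges_iff)
  ultimately have "cycle_edges ws \<in> cycles V E" unfolding cycles_def by blast
  then show False using assms(1) by simp
qed

lemma cone_cycle_apex_degree:
  assumes "cycles V E = {}" "C \<in> cycles (cone_vertices V) (cone_edges V E)"
  shows "2 \<le> card {e \<in> C. None \<in> e}"
proof -
  obtain vs where vs: "C = cycle_edges vs" "set vs \<subseteq> cone_vertices V"
    "is_cycle_list (cone_edges V E) vs"
    using assms(2) unfolding cycles_def by blast
  then have "None \<in> set vs" by (intro cone_cycle_through_apex[OF assms(1)])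
  then show ?thesis unfolding vs(1) using vs(3) by (rule two_cycle_edges_at_vertex[rotated])
qed

lemma card_disjoint_cone_cycles_le:
  assumes "finite V" "cycles V E = {}"
    and F: "F \<subseteq> cycles (cone_vertices V) (cone_edges V E)" "pairwise disjnt F"
  shows "2 * card F \<le> card V"
proof -
  let ?at_apex = "\<lambda>C. {e \<in> C. None \<in> e}"
  have "finite (cycles (cone_vertices V) (cone_edges V E))"
    using assms(1) by (simp add: finite_cycles cone_vertices_def)
  then have "finite F" using F(1) by (rule finite_subset[rotated])
  have "2 * card F = (\<Sum>C\<in>F. 2)" by simp
  also have "\<dots> \<le> (\<Sum>C\<in>F. card (?at_apex C))"
    using F(1) cone_cycle_apex_degree[OF assms(2)] by (intro sum_mono) blast
  also have "\<dots> = card (\<Union>C\<in>F. ?at_apex C)"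
  proof (rule card_UN_disjoint[symmetric])
    show "\<forall>C\<in>F. finite (?at_apex C)"
      using F(1) by (auto simp: cycles_def)
    show "\<forall>C\<in>F. \<forall>D\<in>F. C \<noteq> D \<longrightarrow> ?at_apex C \<inter> ?at_apex D = {}"
      using F(2) by (auto simp: pairwise_def disjnt_def)
  qed fact
  also have "\<dots> \<le> card {e \<in> cone_edges V E. None \<in> e}"
  proof (rule card_mono)
    show "finite {e \<in> cone_edges V E. None \<in> e}"
      unfolding cone_edges_at_apex using assms(1) by simp
    show "(\<Union>C\<in>F. ?at_apex C) \<subseteq> {e \<in> cone_edges V E. None \<in> e}"
      using F(1) cycles_subset_edges by blast
  qed
  also have "\<dots> \<le> card V"
    unfolding cone_edges_at_apex using assms(1) by (rule card_image_le)
  finally show ?thesis .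
qed

definition apex_cycle :: "'a list \<Rightarrow> 'a option set set" where
  "apex_cycle p = cycle_edges (None # map Some p)"

lemma apex_cycle_eq:
  assumes "p \<noteq> []"
  shows "apex_cycle p = (\<lambda>v. {None, Some v}) ` path_ends p \<union> (\<lambda>e. Some ` e) ` path_edges p"
  using assms
  by (auto simp: apex_cycle_def path_ends_def cycle_edges_conv_path_edges path_edges_Cons
      path_edges_map last_map hd_map insert_commute)

lemma apex_cycle_in_cycles:
  assumes "is_path V E p"
  shows "apex_cycle p \<in> cycles (cone_vertices V) (cone_edges V E)"
proof -
  have "p \<noteq> []" using assms by (auto simp: is_path_def)
  then have "path_ends p \<subseteq> V" using assms by (auto simp: is_path_def path_ends_def)
  then have "apex_cycle p \<subseteq> cone_edges V E"
    using assms unfolding apex_cycle_eq[OF \<open>p \<noteq> []\<close>] cone_edges_def is_path_def by blast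
  then have "is_cycle_list (cone_edges V E) (None # map Some p)"
    using assms by (auto simp: is_cycle_list_iff apex_cycle_def is_path_def distinct_map)
  moreover have "set (None # map Some p) \<subseteq> cone_vertices V"
    using assms by (auto simp: cone_vertices_def is_path_def)
  ultimately show ?thesis unfolding cycles_def apex_cycle_def by blast
qed

lemma apex_cycles_disjoint:
  assumes "p \<noteq> []" "q \<noteq> []"
    and "disjnt (path_edges p) (path_edges q)" "disjnt (path_ends p) (path_ends q)"
  shows "disjnt (apex_cycle p) (apex_cycle q)"
proof -
  have "disjnt ((\<lambda>v. {None, Some v}) ` path_ends p) ((\<lambda>v. {None, Some v}) ` path_ends q)"
    using assms(4) by (auto simp: disjnt_def doubleton_eq_iff)
  moreover have "disjnt ((\<lambda>e. Some ` e) ` path_edges p) ((\<lambda>e. Some ` e) ` path_edges q)"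
    using assms(3) by (auto simp: disjnt_def inj_image_eq_iff)
  moreover have "disjnt ((\<lambda>v. {None, Some v}) ` A) ((\<lambda>e. Some ` e) ` B)"
    "disjnt ((\<lambda>e. Some ` e) ` B) ((\<lambda>v. {None, Some v}) ` A)" for A B
    by (auto simp: disjnt_def)
  ultimately show ?thesis
    unfolding apex_cycle_eq[OF assms(1)] apex_cycle_eq[OF assms(2)] disjnt_Un1 disjnt_Un2 by blast
qed

lemma cone_cycles_of_path_pairing:
  assumes "path_pairing V E S P"
  obtains F where "F \<subseteq> cycles (cone_vertices V) (cone_edges V E)" "pairwise disjnt F"
    "card S = 2 * card F"
proof
  have paths: "is_path V E p" if "p \<in> P" for p using assms that by (simp add: path_pairing_def)
  have nonempty: "p \<noteq> []" if "p \<in> P" for p using paths[OF that] by (auto simp: is_path_def)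
  have disj: "disjnt (apex_cycle p) (apex_cycle q)" if "p \<in> P" "q \<in> P" "p \<noteq> q" for p q
    using assms that nonempty
    by (intro apex_cycles_disjoint) (auto simp: path_pairing_def pairwise_def)
  show "apex_cycle ` P \<subseteq> cycles (cone_vertices V) (cone_edges V E)"
    using paths apex_cycle_in_cycles by blast
  show "pairwise disjnt (apex_cycle ` P)"
    using disj by (auto simp: pairwise_image pairwise_def)
  have "inj_on apex_cycle P"
  proof (rule inj_onI, rule ccontr)
    fix p q assume "p \<in> P" "q \<in> P" "apex_cycle p = apex_cycle q" "p \<noteq> q"
    then show False
      using disj[of p q] nonempty[of p] by (simp add: apex_cycle_eq path_ends_def disjnt_def)
  qed
  then show "card S = 2 * card (apex_cycle ` P)"
    using card_path_pairing[OF assms] by (simp add: card_image)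
qed

theorem corollary2p1:
  fixes V :: "'a set" and E :: "'a set set"
  assumes "is_tree V E"
  shows "phi (cone_vertices V) (cone_edges V E) = card V div 2"
proof -
  have "finite V" "cycles V E = {}"
    using assms unfolding is_tree_def simple_graph_def by blast+
  let ?packings = "{card F | F. F \<subseteq> cycles (cone_vertices V) (cone_edges V E) \<and> pairwise disjnt F}"
  have upper: "k \<le> card V div 2" if k: "k \<in> ?packings" for k
  proof -
    obtain F where "k = card F" "F \<subseteq> cycles (cone_vertices V) (cone_edges V E)" "pairwise disjnt F"
      using k by blast
    then have "2 * k \<le> card V"
      by (simp add: card_disjoint_cone_cycles_le[OF \<open>finite V\<close> \<open>cycles V E = {}\<close>])
    then show ?thesis by presburger
  qed
  obtain S where "S \<subseteq> V" "card S = 2 * (card V div 2)"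
    by (rule obtain_subset_with_card_n[of "2 * (card V div 2)" V]) simp
  then have "\<exists>P. path_pairing V E S P" by (intro tree_path_pairing[OF assms]) simp_all
  then obtain P where "path_pairing V E S P" ..
  then obtain F where "F \<subseteq> cycles (cone_vertices V) (cone_edges V E)" "pairwise disjnt F"
    "card S = 2 * card F" by (rule cone_cycles_of_path_pairing)
  then have "card V div 2 \<in> ?packings" using \<open>card S = 2 * (card V div 2)\<close> by auto
  moreover have "finite ?packings" using upper by (meson finite_nat_set_iff_bounded_le)
  ultimately show ?thesis unfolding phi_def using upper by (intro Max_eqI)
qed

end
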